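(* For every integer $k\ge1$, the generating function $H_k(z)=\sum_{n\ge0}\mathbf{P}(\text{a random text of length } n \text{ has exactly } k \text{ clumps of } w)\,z^n$ satisfies $$H_k(z)=\frac{R(z)\,U(z)\,\big(M(z)-K(z)\big)^{k-1}}{(1-K(z))^{k}}=\frac{\pi_w z^{\ell}\,\big(z-1+(1-K(z))D(z)\big)^{k-1}}{(1-K(z))^{k}\,D(z)^{k+1}},$$ where $D(z)=\pi_w z^{\ell}+(1-z)C(z)$.
   Context: Let $\mathcal{A}$ be a finite alphabet with $|\mathcal{A}|\ge2$ and $w\in\mathcal{A}^*$ a fixed word of length $\ell=|w|\ge 2$. Bernoulli model: each letter $a$ has probability $p_a>0$, $\sum_a p_a=1$, $\mathbf{P}(a_1\cdots a_n)=\prod_i p_{a_i}$; for a language $L$, $L(z)=\sum_{x\in L}\mathbf{P}(x)z^{|x|}$; $\pi_w=\mathbf{P}(w)$. Occurrences of $w$ are position intervals where $w$ appears; two occurrences overlap if their intervals share a position; clumps are equivalence classes of occurrences under the transitive closure of overlapping. Autocorrelation set $\mathcal{C}=\{\epsilon\}\cup\{e\in\mathcal{A}^+: |e|<\ell,\ \exists e'\in\mathcal{A}^+,\ we=e'w\}$ with generating function $C(z)$, $\mathcal{C}_\circ=\mathcal{C}\setminus\{\epsilon\}$, $\mathcal{K}=\mathcal{C}_\circ\setminus\mathcal{C}_\circ\mathcal{A}^+$ with generating function $K(z)$. Languages: $\mathcal{R}=\{r\in\mathcal{A}^*w: \text{no } r=xwy,\ |y|>0\}$; $\mathcal{M}=\{m\in\mathcal{A}^+: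 wm\in\mathcal{A}^*w,\ \text{no } wm=xwy,\ |x|>0,|y|>0\}$; $\mathcal{U}=\{u\in\mathcal{A}^*: \text{no } wu=xwy,\ |x|>0\}$, with generating functions $R,M,U$; explicitly $R=\pi_w z^\ell/D$, $M=1+(z-1)/D$, $U=1/D$. *)

theory Defs
  imports "HOL-Computational_Algebra.Formal_Power_Series" "HOL-Library.Cardinality"
begin

definition wprob :: "('a \<Rightarrow> real) \<Rightarrow> 'a list \<Rightarrow> real" where
  "wprob p x = prod_list (map p x)"

definition lang_gf :: "('a \<Rightarrow> real) \<Rightarrow> 'a list set \<Rightarrow> real fps" where
  "lang_gf p L = Abs_fps (\<lambda>n. \<Sum>x\<in>{x\<in>L. length x = n}. wprob p x)"

text \<open>Occurrences of w in x, identified by their (0-based) starting position i;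
  the occurrence occupies positions i, ..., i + |w| - 1.\<close>

definition occs :: "'a list \<Rightarrow> 'a list \<Rightarrow> nat set" where
  "occs w x = {i. i + length w \<le> length x \<and> take (length w) (drop i x) = w}"

definition overlap_rel :: "'a list \<Rightarrow> 'a list \<Rightarrow> (nat \<times> nat) set" where
  "overlap_rel w x = {(i, j). i \<in> occs w x \<and> j \<in> occs w x \<and>
      {i..<i + length w} \<inter> {j..<j + length w} \<noteq> {}}"

definition clumps :: "'a list \<Rightarrow> 'a list \<Rightarrow> nat set set" where
  "clumps w x = occs w x // ((overlap_rel w x)\<^sup>*)"

definition num_clumps :: "'a list \<Rightarrow> 'a list \<Rightarrow> nat" where
  "num_clumps w x = card (clumps w x)"

definition H_gf :: "('a \<Rightarrow> real) \<Rightarrow> 'a list \<Rightarrow> nat \<Rightarrow> real fps" where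
  "H_gf p w k = lang_gf p {x. num_clumps w x = k}"

definition autocorr :: "'a list \<Rightarrow> 'a list set" where
  "autocorr w = {[]} \<union> {e. e \<noteq> [] \<and> length e < length w \<and> (\<exists>e'. e' \<noteq> [] \<and> w @ e = e' @ w)}"

definition autocorr0 :: "'a list \<Rightarrow> 'a list set" where
  "autocorr0 w = autocorr w - {[]}"

definition Kset :: "'a list \<Rightarrow> 'a list set" where
  "Kset w = autocorr0 w - {c @ v | c v. c \<in> autocorr0 w \<and> v \<noteq> []}"

definition Rset :: "'a list \<Rightarrow> 'a list set" where
  "Rset w = {r. (\<exists>u. r = u @ w) \<and> \<not> (\<exists>x y. r = x @ w @ y \<and> y \<noteq> [])}"

definition Mset :: "'a list \<Rightarrow> 'a list set" where
  "Mset w = {m. m \<noteq> [] \<and> (\<exists>u. w @ m = u @ w) \<and>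
              \<not> (\<exists>x y. w @ m = x @ w @ y \<and> x \<noteq> [] \<and> y \<noteq> [])}"

definition Uset :: "'a list \<Rightarrow> 'a list set" where
  "Uset w = {u. \<not> (\<exists>x y. w @ u = x @ w @ y \<and> x \<noteq> [])}"

definition D_gf :: "('a \<Rightarrow> real) \<Rightarrow> 'a list \<Rightarrow> real fps" where
  "D_gf p w = fps_const (wprob p w) * fps_X ^ length w + (1 - fps_X) * lang_gf p (autocorr w)"

end

theory Submission
  imports Defs
begin

(*
  Write A* for all words, N for the words avoiding w, E = A* w for the words ending with w
  and E_k for the words of E having exactly k clumps.  The proof is a translation of
  unambiguous decompositions of languages into identities of formal power series:

  (1) Cutting a text at its last occurrence of w gives {x. x has k clumps} = E_k U (k >= 1),
      so H_k = E_k U.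
  (2) Cutting a word of E at its second-to-last occurrence gives
        E_(j+1) = [j = 0] R  +  E_(j+1) K  +  E_j (M - K):
      appending m in M to a word ending with w creates exactly one new occurrence, and it
      starts a new clump iff |m| >= |w|, i.e. iff m is not in K.  Hence E_k (1-K)^k = R (M-K)^(k-1).
  (3) The classical equations N + R = 1 + N z,  N pi_w z^l = R C,  A* = N + A* pi_w z^l U and
      U z = U - 1 + M yield R D = pi_w z^l,  U D = 1  and  M D = D + z - 1.
  Since 1 - K and D have constant term 1 they are units, and the theorem follows by division.
*)

section \<open>Generating functions of languages\<close>

definition conc :: "'a list set \<Rightarrow> 'a list set \<Rightarrow> 'a list set" where
  "conc A B = {x @ y | x y. x \<in> A \<and> y \<in> B}"

definition unambiguous :: "'a list set \<Rightarrow> 'a list set \<Rightarrow> bool" where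
  "unambiguous A B \<longleftrightarrow> inj_on (\<lambda>(x, y). x @ y) (A \<times> B)"

lemma concI: "a \<in> A \<Longrightarrow> b \<in> B \<Longrightarrow> x = a @ b \<Longrightarrow> x \<in> conc A B"
  unfolding conc_def by blast

lemma concE: "x \<in> conc A B \<Longrightarrow> (\<And>a b. a \<in> A \<Longrightarrow> b \<in> B \<Longrightarrow> x = a @ b \<Longrightarrow> P) \<Longrightarrow> P"
  unfolding conc_def by blast

lemma conc_mono: "A \<subseteq> A' \<Longrightarrow> B \<subseteq> B' \<Longrightarrow> conc A B \<subseteq> conc A' B'"
  unfolding conc_def by blast

lemma unambiguous_subset:
  "unambiguous A B \<Longrightarrow> A' \<subseteq> A \<Longrightarrow> B' \<subseteq> B \<Longrightarrow> unambiguous A' B'"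
  unfolding unambiguous_def by (rule inj_on_subset) auto

lemma unambiguous_fixed_length: "unambiguous A {y. length y = n}"
  unfolding unambiguous_def
proof (rule inj_onI)
  fix q q' assume h: "q \<in> A \<times> {y. length y = n}" "q' \<in> A \<times> {y. length y = n}"
    "(\<lambda>(x, y). x @ y) q = (\<lambda>(x, y). x @ y) q'"
  obtain a b c d where qq: "q = (a, b)" "q' = (c, d)" by fastforce
  have "length b = length d" "a @ b = c @ d" using h qq by simp_all
  thus "q = q'" using qq append_eq_append_conv[of a c b d] by simp
qed

lemma unambiguous_single: "unambiguous A {w}"
  using unambiguous_subset[OF unambiguous_fixed_length[of A "length w"], of A "{w}"] by auto

lemma unambiguous_conc_disjoint:
  assumes "unambiguous A B" "A1 \<subseteq> A" "A2 \<subseteq> A" "B1 \<subseteq> B" "B2 \<subseteq> B" "B1 \<inter> B2 = {}"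
  shows "conc A1 B1 \<inter> conc A2 B2 = {}"
proof -
  have False if "a1 \<in> A1" "b1 \<in> B1" "a2 \<in> A2" "b2 \<in> B2" "a1 @ b1 = a2 @ b2" for a1 b1 a2 b2
  proof -
    have "(a1, b1) = (a2, b2)"
      using inj_onD[of "\<lambda>(x, y). x @ y" "A \<times> B" "(a1, b1)" "(a2, b2)"] assms(1-5) that
      unfolding unambiguous_def by auto
    thus False using that(2,4) assms(6) by auto
  qed
  thus ?thesis unfolding conc_def by blast
qed

lemma lang_gf_nth: "fps_nth (lang_gf p L) n = (\<Sum>x\<in>{x\<in>L. length x = n}. wprob p x)"
  by (simp add: lang_gf_def)

lemma wprob_append: "wprob p (x @ y) = wprob p x * wprob p y"
  by (simp add: wprob_def)

lemma wprob_pos: "(\<And>a. p a > 0) \<Longrightarrow> wprob p x > 0"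
  unfolding wprob_def by (induction x) auto

lemma finite_length_slice: "finite {x \<in> (L :: 'a::finite list set). length x = n}"
  by (rule finite_subset[OF _ finite_list_length[of n]]) auto

lemma lang_gf_empty: "lang_gf p {} = 0"
  by (rule fps_ext) (simp add: lang_gf_nth)

lemma lang_gf_union:
  fixes A B :: "'a::finite list set"
  assumes "A \<inter> B = {}"
  shows "lang_gf p (A \<union> B) = lang_gf p A + lang_gf p B"
proof (rule fps_ext)
  fix n
  have slice: "{x \<in> A \<union> B. length x = n} = {x \<in> A. length x = n} \<union> {x \<in> B. length x = n}"
    by auto
  show "fps_nth (lang_gf p (A \<union> B)) n = fps_nth (lang_gf p A + lang_gf p B) n"
    unfolding lang_gf_nth fps_add_nth slice
    by (rule sum.union_disjoint) (use assms finite_length_slice in auto)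
qed

lemma lang_gf_diff:
  fixes A B :: "'a::finite list set"
  assumes "B \<subseteq> A"
  shows "lang_gf p (A - B) = lang_gf p A - lang_gf p B"
proof -
  have "lang_gf p A = lang_gf p ((A - B) \<union> B)" using assms by (simp add: Un_absorb2)
  also have "\<dots> = lang_gf p (A - B) + lang_gf p B" by (rule lang_gf_union) auto
  finally show ?thesis by simp
qed

lemma lang_gf_conc:
  fixes A B :: "'a::finite list set"
  assumes "unambiguous A B"
  shows "lang_gf p (conc A B) = lang_gf p A * lang_gf p B"
proof (rule fps_ext)
  fix n
  define F where "F = (\<lambda>i. {x \<in> A. length x = i} \<times> {y \<in> B. length y = n - i})"
  define cat :: "nat \<times> 'a list \<times> 'a list \<Rightarrow> 'a list" where "cat = (\<lambda>(i, q). fst q @ snd q)"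
  have cat_inj: "inj_on cat (Sigma {0..n} F)"
    using assms unfolding unambiguous_def inj_on_def F_def cat_def by auto
  have cat_img: "cat ` Sigma {0..n} F = {x \<in> conc A B. length x = n}"
  proof (rule set_eqI, rule iffI)
    fix x assume "x \<in> cat ` Sigma {0..n} F"
    thus "x \<in> {x \<in> conc A B. length x = n}" by (auto simp: F_def cat_def intro: concI)
  next
    fix x assume "x \<in> {x \<in> conc A B. length x = n}"
    then obtain a b where "x = a @ b" "a \<in> A" "b \<in> B" "length x = n" by (auto simp: conc_def)
    thus "x \<in> cat ` Sigma {0..n} F"
      by (intro image_eqI[of _ _ "(length a, (a, b))"]) (auto simp: F_def cat_def)
  qed
  have "fps_nth (lang_gf p A * lang_gf p B) n =
          (\<Sum>i=0..n. \<Sum>q\<in>F i. wprob p (fst q) * wprob p (snd q))"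
    unfolding fps_mult_nth lang_gf_nth F_def
    by (simp add: sum_product sum.cartesian_product case_prod_beta)
  also have "\<dots> = (\<Sum>iq\<in>Sigma {0..n} F. wprob p (cat iq))"
    by (subst sum.Sigma) (simp_all add: F_def cat_def finite_length_slice wprob_append case_prod_beta)
  also have "\<dots> = (\<Sum>x\<in>cat ` Sigma {0..n} F. wprob p x)"
    by (simp add: sum.reindex[OF cat_inj])
  finally show "fps_nth (lang_gf p (conc A B)) n = fps_nth (lang_gf p A * lang_gf p B) n"
    by (simp add: lang_gf_nth cat_img)
qed

lemma lang_gf_single: "lang_gf p {w} = fps_const (wprob p w) * fps_X ^ length w"
proof (rule fps_ext)
  fix n
  have "{x \<in> {w}. length x = n} = (if n = length w then {w} else {})" by auto
  thus "fps_nth (lang_gf p {w}) n = fps_nth (fps_const (wprob p w) * fps_X ^ length w) n"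
    by (simp add: lang_gf_nth fps_X_power_nth)
qed

lemma lang_gf_Nil: "lang_gf p {[]} = 1"
  using lang_gf_single[of p "[]"] by (simp add: wprob_def)

lemma sum_wprob_length:
  fixes p :: "'a::finite \<Rightarrow> real"
  shows "(\<Sum>x\<in>{x. length x = n}. wprob p x) = (\<Sum>a\<in>UNIV. p a) ^ n"
proof (induction n)
  case 0
  then show ?case by (simp add: wprob_def)
next
  case (Suc n)
  have e: "{x::'a list. length x = Suc n} = (\<lambda>(a, xs). a # xs) ` (UNIV \<times> {x. length x = n})"
    by (auto simp: length_Suc_conv)
  have "(\<Sum>x\<in>{x::'a list. length x = Suc n}. wprob p x) =
        (\<Sum>q\<in>UNIV \<times> {x::'a list. length x = n}. wprob p (fst q # snd q))"
    unfolding e by (subst sum.reindex) (auto simp: inj_on_def case_prod_beta)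
  also have "\<dots> = (\<Sum>a\<in>UNIV. p a) * (\<Sum>x\<in>{x::'a list. length x = n}. wprob p x)"
    by (simp add: sum.cartesian_product case_prod_beta sum_product wprob_def)
  finally show ?case using Suc by simp
qed

lemma lang_gf_all_words:
  fixes p :: "'a::finite \<Rightarrow> real"
  assumes "(\<Sum>a\<in>UNIV. p a) = 1"
  shows "lang_gf p UNIV * (1 - fps_X) = 1"
proof -
  have "lang_gf p UNIV = Abs_fps (\<lambda>n. 1)"
    by (rule fps_ext) (simp add: lang_gf_nth sum_wprob_length assms)
  moreover have "Abs_fps (\<lambda>n. 1::real) * (1 - fps_X) = 1"
  proof (rule fps_ext)
    fix n show "fps_nth (Abs_fps (\<lambda>n. 1::real) * (1 - fps_X)) n = fps_nth (1::real fps) n"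
      by (cases n) (simp_all add: algebra_simps fps_mult_nth_1)
  qed
  ultimately show ?thesis by simp
qed

lemma lang_gf_letters:
  fixes p :: "'a::finite \<Rightarrow> real"
  assumes "(\<Sum>a\<in>UNIV. p a) = 1"
  shows "lang_gf p {x. length x = 1} = fps_X"
proof (rule fps_ext)
  fix n
  show "fps_nth (lang_gf p {x. length x = 1}) n = fps_nth fps_X n"
  proof (cases "n = 1")
    case True thus ?thesis by (simp add: lang_gf_nth sum_wprob_length assms fps_X_def)
  next
    case False
    hence "{x \<in> {x::'a list. length x = 1}. length x = n} = {}" by auto
    thus ?thesis using False by (simp only: lang_gf_nth) (simp add: fps_X_def)
  qed
qed

section \<open>Occurrences of a word\<close>

lemma occs_bound: "i \<in> occs w x \<Longrightarrow> i + length w \<le> length x"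
  by (simp add: occs_def)

lemma occs_finite: "finite (occs w x)"
  by (rule finite_subset[of _ "{..length x}"]) (auto simp: occs_def)

lemma occs_Nil: "0 < length w \<Longrightarrow> occs w [] = {}"
  by (auto simp: occs_def)

lemma occs_append_left: "i \<in> occs w v \<Longrightarrow> i \<in> occs w (v @ y)"
  by (auto simp: occs_def)

lemma occs_append_shift: "i \<in> occs w y \<Longrightarrow> length v + i \<in> occs w (v @ y)"
  by (auto simp: occs_def)

lemma occs_append_inv_left: "i \<in> occs w (v @ y) \<Longrightarrow> i + length w \<le> length v \<Longrightarrow> i \<in> occs w v"
  by (auto simp: occs_def)

lemma occs_append_inv_right: "i \<in> occs w (v @ y) \<Longrightarrow> length v \<le> i \<Longrightarrow> i - length v \<in> occs w y"
  by (auto simp: occs_def)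

lemma occs_end: "length u \<in> occs w (u @ w)"
  by (simp add: occs_def)

lemma occ_split:
  assumes "j \<in> occs w z" shows "z = take j z @ w @ drop (j + length w) z"
proof -
  have "take (length w) (drop j z) = w" using assms by (simp add: occs_def)
  hence "drop j z = w @ drop (length w) (drop j z)" by (metis append_take_drop_id)
  thus ?thesis by (metis append_take_drop_id drop_drop add.commute)
qed

lemma occ_decomp: "z = x @ w @ y \<longleftrightarrow>
   length x \<in> occs w z \<and> x = take (length x) z \<and> y = drop (length x + length w) z"
proof
  assume "z = x @ w @ y"
  thus "length x \<in> occs w z \<and> x = take (length x) z \<and> y = drop (length x + length w) z"
    by (simp add: occs_def)
next
  assume "length x \<in> occs w z \<and> x = take (length x) z \<and> y = drop (length x + length w) z"
  thus "z = x @ w @ y" using occ_split[of "length x" w z] by simp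
qed

lemma ex_split_occ: "(\<exists>x y. z = x @ w @ y \<and> P x y) \<longleftrightarrow>
   (\<exists>j\<in>occs w z. P (take j z) (drop (j + length w) z))"
proof
  assume "\<exists>x y. z = x @ w @ y \<and> P x y"
  then obtain x y where "z = x @ w @ y" "P x y" by blast
  thus "\<exists>j\<in>occs w z. P (take j z) (drop (j + length w) z)"
    using occ_decomp[of z x w y] by metis
next
  assume "\<exists>j\<in>occs w z. P (take j z) (drop (j + length w) z)"
  then obtain j where "j \<in> occs w z" "P (take j z) (drop (j + length w) z)" by blast
  thus "\<exists>x y. z = x @ w @ y \<and> P x y" using occ_split by blast
qed

lemma ends_with_iff: "(\<exists>u. z = u @ w) \<longleftrightarrow> length w \<le> length z \<and> length z - length w \<in> occs w z"
proof
  assume "\<exists>u. z = u @ w"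
  thus "length w \<le> length z \<and> length z - length w \<in> occs w z" using occs_end by fastforce
next
  assume h: "length w \<le> length z \<and> length z - length w \<in> occs w z"
  hence "z = take (length z - length w) z @ w @ drop (length z) z"
    using occ_split[of "length z - length w" w z] by simp
  thus "\<exists>u. z = u @ w" by auto
qed

section \<open>Counting clumps of a set of positions\<close>

definition overlaps :: "nat \<Rightarrow> nat set \<Rightarrow> (nat \<times> nat) set" where
  "overlaps L A = {(i, j). i \<in> A \<and> j \<in> A \<and> {i..<i + L} \<inter> {j..<j + L} \<noteq> {}}"

lemma overlaps_iff: "(i, j) \<in> overlaps L A \<longleftrightarrow> i \<in> A \<and> j \<in> A \<and> i < j + L \<and> j < i + L"
proof -
  have "{i..<i + L} \<inter> {j..<j + L} \<noteq> {} \<longleftrightarrow> i < j + L \<and> j < i + L"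
  proof
    assume "i < j + L \<and> j < i + L"
    hence "max i j \<in> {i..<i + L} \<inter> {j..<j + L}" by (auto simp: max_def)
    thus "{i..<i + L} \<inter> {j..<j + L} \<noteq> {}" by blast
  qed auto
  thus ?thesis by (simp add: overlaps_def)
qed

lemma overlaps_mono: "A \<subseteq> A' \<Longrightarrow> overlaps L A \<subseteq> overlaps L A'"
  by (auto simp: overlaps_iff)

lemma overlaps_closure_in: "(a, c) \<in> (overlaps L A)\<^sup>* \<Longrightarrow> a \<in> A \<Longrightarrow> c \<in> A"
  by (induction rule: rtrancl_induct) (auto simp: overlaps_iff)

lemma overlaps_closure_sym: "(a, c) \<in> (overlaps L A)\<^sup>* \<Longrightarrow> (c, a) \<in> (overlaps L A)\<^sup>*"
  using sym_rtrancl[of "overlaps L A"] by (auto simp: sym_def overlaps_iff)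

lemma quotient_as_image: "A // r = (\<lambda>x. r``{x}) ` A"
  by (auto simp: quotient_def)

lemma num_clumps_overlaps: "num_clumps w x = card (occs w x // (overlaps (length w) (occs w x))\<^sup>*)"
  by (simp add: num_clumps_def clumps_def overlap_rel_def overlaps_def)

lemma overlaps_chain_insert:
  assumes nA: "n \<notin> A"
    and B_def: "B = {a \<in> A. (a, n) \<in> overlaps L (insert n A)}"
    and B_linked: "\<And>b1 b2. b1 \<in> B \<Longrightarrow> b2 \<in> B \<Longrightarrow> (b1, b2) \<in> (overlaps L A)\<^sup>*"
    and path: "(a, c) \<in> (overlaps L (insert n A))\<^sup>*" and aA: "a \<in> A"
  shows "(c \<in> A \<and> (a, c) \<in> (overlaps L A)\<^sup>*) \<or> (c = n \<and> (\<exists>b\<in>B. (a, b) \<in> (overlaps L A)\<^sup>*))"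
  using path
proof (induction rule: rtrancl_induct)
  case base
  then show ?case using aA by auto
next
  case (step y z)
  from step.hyps(2) have yz: "y \<in> insert n A" "z \<in> insert n A" "y < z + L" "z < y + L"
    by (auto simp: overlaps_iff)
  from step.IH show ?case
  proof
    assume h: "y \<in> A \<and> (a, y) \<in> (overlaps L A)\<^sup>*"
    show ?case
    proof (cases "z = n")
      case True
      hence "y \<in> B" using h step.hyps(2) B_def by auto
      thus ?thesis using h True by auto
    next
      case False
      hence "(y, z) \<in> overlaps L A" using yz h by (auto simp: overlaps_iff)
      thus ?thesis using h False yz by (auto intro: rtrancl_into_rtrancl)
    qed
  next
    assume "y = n \<and> (\<exists>b\<in>B. (a, b) \<in> (overlaps L A)\<^sup>*)"
    then obtain b where y: "y = n" and b: "b \<in> B" "(a, b) \<in> (overlaps L A)\<^sup>*" by auto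
    show ?case
    proof (cases "z = n")
      case True thus ?thesis using b by auto
    next
      case False
      hence zA: "z \<in> A" using yz by auto
      hence "z \<in> B" using B_def yz y by (auto simp: overlaps_iff)
      hence "(b, z) \<in> (overlaps L A)\<^sup>*" using B_linked b by auto
      thus ?thesis using b zA by (auto intro: rtrancl_trans)
    qed
  qed
qed

lemma clumps_insert_far:
  fixes A :: "nat set"
  assumes fin: "finite A" and L: "L > 0" and far: "\<And>a. a \<in> A \<Longrightarrow> a + L \<le> n"
  shows "card (insert n A // (overlaps L (insert n A))\<^sup>*) = Suc (card (A // (overlaps L A)\<^sup>*))"
proof -
  define r where "r = (overlaps L A)\<^sup>*"
  define r' where "r' = (overlaps L (insert n A))\<^sup>*"
  have nA: "n \<notin> A" using far L by force
  have noB: "{a \<in> A. (a, n) \<in> overlaps L (insert n A)} = {}" by (auto simp: overlaps_iff dest: far)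
  have stay: "c \<in> A \<and> (a, c) \<in> r" if "(a, c) \<in> r'" "a \<in> A" for a c
    using overlaps_chain_insert[OF nA refl _ that[unfolded r'_def]] noB unfolding r_def by blast
  have rr': "r \<subseteq> r'" unfolding r_def r'_def by (intro rtrancl_mono overlaps_mono) auto
  have old: "r'``{a} = r``{a}" if "a \<in> A" for a using stay that rr' by auto
  have new: "r'``{n} = {n}"
  proof -
    have "c = n" if "(n, c) \<in> r'" for c
      using stay[OF overlaps_closure_sym[OF that[unfolded r'_def], folded r'_def]] nA
        overlaps_closure_in[OF that[unfolded r'_def]] by blast
    thus ?thesis unfolding r'_def by auto
  qed
  have "insert n A // r' = insert {n} (A // r)"
    unfolding quotient_as_image using old new by (auto simp: image_iff)
  moreover have "{n} \<notin> A // r"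
    using overlaps_closure_in[of _ n L A] nA unfolding quotient_as_image r_def by blast
  moreover have "finite (A // r)" using fin by (simp add: quotient_as_image)
  ultimately show ?thesis unfolding r_def r'_def by simp
qed

(* When the new position n lies after all of A and overlaps i in A, the positions of A overlapping
   n are all linked to i, so a chain from A either stays in A or ends at n after passing by i. *)
lemma overlaps_chain_insert_near:
  assumes iA: "i \<in> A" and near: "n < i + L" and below: "\<And>a. a \<in> A \<Longrightarrow> a < n"
    and path: "(a, c) \<in> (overlaps L (insert n A))\<^sup>*" and aA: "a \<in> A"
  shows "(c \<in> A \<and> (a, c) \<in> (overlaps L A)\<^sup>*) \<or> (c = n \<and> (a, i) \<in> (overlaps L A)\<^sup>*)"
proof -
  define B where "B = {a \<in> A. (a, n) \<in> overlaps L (insert n A)}"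
  have B_near: "b \<in> A \<and> n < b + L" if "b \<in> B" for b
    using that below by (auto simp: B_def overlaps_iff)
  have B_linked: "(b1, b2) \<in> (overlaps L A)\<^sup>*" if "b1 \<in> B" "b2 \<in> B" for b1 b2
  proof -
    have "(b1, b2) \<in> overlaps L A"
      using B_near[OF that(1)] B_near[OF that(2)] below[of b1] below[of b2] by (auto simp: overlaps_iff)
    thus ?thesis by blast
  qed
  have iB: "i \<in> B" using iA near below[OF iA] by (auto simp: B_def overlaps_iff)
  have nA: "n \<notin> A" using below by blast
  have "(c \<in> A \<and> (a, c) \<in> (overlaps L A)\<^sup>*) \<or> (c = n \<and> (\<exists>b\<in>B. (a, b) \<in> (overlaps L A)\<^sup>*))"
    by (rule overlaps_chain_insert[OF nA B_def B_linked path aA])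
  thus ?thesis using B_linked[OF _ iB] by (meson rtrancl_trans)
qed

lemma closure_insert_near:
  fixes A :: "nat set"
  assumes iA: "i \<in> A" and near: "n < i + L" and below: "\<And>a. a \<in> A \<Longrightarrow> a < n"
    and r_def: "r = (overlaps L A)\<^sup>*" and r'_def: "r' = (overlaps L (insert n A))\<^sup>*"
    and g_def: "g = (\<lambda>X. if i \<in> X then insert n X else X)"
  shows "\<And>a. a \<in> A \<Longrightarrow> r'``{a} = g (r``{a})" and "r'``{n} = g (r``{i})"
proof -
  have nA: "n \<notin> A" using below by blast
  have chain: "(c \<in> A \<and> (a, c) \<in> r) \<or> (c = n \<and> (a, i) \<in> r)" if "(a, c) \<in> r'" "a \<in> A" for a c
    using overlaps_chain_insert_near[OF iA near below] that unfolding r_def r'_def by blast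
  have rr': "r \<subseteq> r'" unfolding r_def r'_def by (intro rtrancl_mono overlaps_mono) auto
  have in_r': "(i, n) \<in> r'" "(n, i) \<in> r'"
    using iA near below[OF iA] unfolding r'_def by (auto simp: overlaps_iff)
  have tr': "trans r'" unfolding r'_def by (rule trans_rtrancl)
  show "r'``{a} = g (r``{a})" if aA: "a \<in> A" for a
  proof (rule set_eqI, rule iffI)
    fix c assume "c \<in> r'``{a}"
    thus "c \<in> g (r``{a})" using chain[of a c] aA by (auto simp: g_def)
  next
    fix c assume "c \<in> g (r``{a})"
    thus "c \<in> r'``{a}" using rr' in_r' by (auto simp: g_def split: if_splits intro: transD[OF tr'])
  qed
  show "r'``{n} = g (r``{i})"
  proof (rule set_eqI, rule iffI)
    fix c assume h: "c \<in> r'``{n}"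
    show "c \<in> g (r``{i})"
    proof (cases "c = n")
      case True thus ?thesis by (auto simp: g_def r_def)
    next
      case False
      have "c \<in> A" using h False overlaps_closure_in unfolding r'_def by blast
      moreover have "(c, n) \<in> r'" using h overlaps_closure_sym unfolding r'_def by blast
      ultimately have "(c, i) \<in> r" using chain nA by blast
      hence "(i, c) \<in> r" using overlaps_closure_sym unfolding r_def by blast
      thus ?thesis by (auto simp: g_def r_def)
    qed
  next
    fix c assume "c \<in> g (r``{i})"
    hence "c = n \<or> (i, c) \<in> r" by (auto simp: g_def split: if_splits)
    thus "c \<in> r'``{n}" using rr' in_r' by (auto intro: transD[OF tr'])
  qed
qed

lemma clumps_insert_near:
  fixes A :: "nat set"
  assumes iA: "i \<in> A" and near: "n < i + L" and below: "\<And>a. a \<in> A \<Longrightarrow> a < n"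
  shows "card (insert n A // (overlaps L (insert n A))\<^sup>*) = card (A // (overlaps L A)\<^sup>*)"
proof -
  define r where "r = (overlaps L A)\<^sup>*"
  define r' where "r' = (overlaps L (insert n A))\<^sup>*"
  define g where "g = (\<lambda>X. if i \<in> X then insert n X else X)"
  note classes = closure_insert_near[OF iA near below r_def r'_def g_def]
  have "insert n A // r' = insert (g (r``{i})) ((\<lambda>a. g (r``{a})) ` A)"
    unfolding quotient_as_image image_insert using classes by simp
  also have "\<dots> = g ` (A // r)"
    using iA unfolding quotient_as_image image_image by blast
  finally have quot: "insert n A // r' = g ` (A // r)" .
  have n_new: "n \<notin> Z" if "Z \<in> A // r" for Z
    using that below overlaps_closure_in unfolding quotient_as_image r_def by blast
  have "inj_on g (A // r)"
  proof (rule inj_onI)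
    fix X Y assume "X \<in> A // r" "Y \<in> A // r" "g X = g Y"
    hence "g X - {n} = g Y - {n}" "n \<notin> X" "n \<notin> Y" using n_new by auto
    thus "X = Y" by (simp add: g_def split: if_splits)
  qed
  with quot show ?thesis unfolding r_def r'_def by (simp add: card_image)
qed

lemma num_clumps_0: "num_clumps w x = 0 \<longleftrightarrow> occs w x = {}"
  unfolding num_clumps_overlaps quotient_as_image by (auto simp: occs_finite)

lemma num_clumps_single: "occs w x = {a} \<Longrightarrow> num_clumps w x = 1"
  unfolding num_clumps_overlaps quotient_as_image by simp

section \<open>The languages R, M, U, K in terms of occurrences\<close>

lemma R_char: "r \<in> Rset w \<longleftrightarrow> (\<exists>u. r = u @ w) \<and> (\<forall>j\<in>occs w r. j + length w = length r)"
proof -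
  have "(\<exists>x y. r = x @ w @ y \<and> y \<noteq> []) \<longleftrightarrow> (\<exists>j\<in>occs w r. drop (j + length w) r \<noteq> [])"
    by (rule ex_split_occ)
  also have "\<dots> \<longleftrightarrow> (\<exists>j\<in>occs w r. j + length w \<noteq> length r)"
    using occs_bound[of _ w r] by (metis drop_eq_Nil le_antisym)
  finally show ?thesis unfolding Rset_def by auto
qed

lemma M_char: "m \<in> Mset w \<longleftrightarrow> m \<noteq> [] \<and> (\<exists>u. w @ m = u @ w) \<and>
   (\<forall>j\<in>occs w (w @ m). j = 0 \<or> j + length w = length (w @ m))"
proof -
  have "(\<exists>x y. w @ m = x @ w @ y \<and> x \<noteq> [] \<and> y \<noteq> []) \<longleftrightarrow>
     (\<exists>j\<in>occs w (w @ m). take j (w @ m) \<noteq> [] \<and> drop (j + length w) (w @ m) \<noteq> [])"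
    by (rule ex_split_occ)
  also have "\<dots> \<longleftrightarrow> (\<exists>j\<in>occs w (w @ m). j \<noteq> 0 \<and> j + length w \<noteq> length (w @ m))"
  proof -
    have "take j (w @ m) \<noteq> [] \<and> drop (j + length w) (w @ m) \<noteq> [] \<longleftrightarrow>
          j \<noteq> 0 \<and> j + length w \<noteq> length (w @ m)" if "j \<in> occs w (w @ m)" for j
      using occs_bound[OF that] by (auto simp: take_eq_Nil)
    thus ?thesis by blast
  qed
  finally show ?thesis unfolding Mset_def by auto
qed

lemma U_char: "u \<in> Uset w \<longleftrightarrow> (\<forall>j\<in>occs w (w @ u). j = 0)"
proof -
  have "(\<exists>x y. w @ u = x @ w @ y \<and> x \<noteq> []) \<longleftrightarrow> (\<exists>j\<in>occs w (w @ u). take j (w @ u) \<noteq> [])"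
    by (rule ex_split_occ)
  also have "\<dots> \<longleftrightarrow> (\<exists>j\<in>occs w (w @ u). j \<noteq> 0)"
  proof -
    have "take j (w @ u) \<noteq> [] \<longleftrightarrow> j \<noteq> 0" if "j \<in> occs w (w @ u)" for j
      using occs_bound[OF that] by (auto simp: take_eq_Nil)
    thus ?thesis by blast
  qed
  finally show ?thesis unfolding Uset_def by auto
qed

lemma Nil_in_U: "0 < length w \<Longrightarrow> [] \<in> Uset w"
  unfolding U_char by (auto simp: occs_def)

lemma R_occs:
  assumes r: "r \<in> Rset w" shows "occs w r = {length r - length w}"
proof -
  have rc: "(\<exists>u. r = u @ w) \<and> (\<forall>j\<in>occs w r. j + length w = length r)"
    using r R_char[of r w] by simp
  then obtain u where u: "r = u @ w" by blast
  have all: "j = length r - length w" if "j \<in> occs w r" for j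
    using rc that by (metis add_diff_cancel_right')
  have lu: "length u \<in> occs w r" using u occs_end by simp
  have e: "length r - length w = length u" using u by simp
  show ?thesis unfolding e using all[unfolded e] lu by blast
qed

(* A word of K is in M: its new occurrence cannot sit strictly inside w m, since that would
   exhibit a shorter nonempty autocorrelation prefix of m. *)
lemma K_in_M:
  assumes mK: "m \<in> Kset w"
  shows "m \<in> Mset w" and "length m < length w"
proof -
  have m0: "m \<noteq> []" "length m < length w" and e': "\<exists>e'. e' \<noteq> [] \<and> w @ m = e' @ w"
    using mK unfolding Kset_def autocorr0_def autocorr_def by blast+
  have minimal: "\<not> (\<exists>c v. m = c @ v \<and> c \<in> autocorr0 w \<and> v \<noteq> [])"
    using mK unfolding Kset_def by blast
  have "j = 0 \<or> j + length w = length (w @ m)" if j: "j \<in> occs w (w @ m)" for j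
  proof (rule ccontr)
    assume "\<not> (j = 0 \<or> j + length w = length (w @ m))"
    hence j0: "j \<noteq> 0" "j < length m" using occs_bound[OF j] by auto
    define T where "T = take j (w @ m)"
    have "w @ m = T @ w @ drop (j + length w) (w @ m)" unfolding T_def by (rule occ_split[OF j])
    moreover have "length T = j" unfolding T_def using occs_bound[OF j] by simp
    ultimately have "take (length w + j) (w @ m) = T @ w" by (metis append.assoc append_take_drop_id
        add.commute length_append append_eq_conv_conj)
    hence "w @ take j m = take j (w @ m) @ w" unfolding T_def by simp
    moreover have "take j m \<noteq> []" "length (take j m) < length w" "take j (w @ m) \<noteq> []"
      using j0 m0 by auto
    ultimately have "take j m \<in> autocorr0 w" unfolding autocorr0_def autocorr_def by blast
    moreover have "m = take j m @ drop j m" "drop j m \<noteq> []" using j0 by simp_all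
    ultimately show False using minimal by blast
  qed
  thus "m \<in> Mset w" using m0 e' M_char by blast
  show "length m < length w" by (fact m0(2))
qed

lemma short_M_in_K:
  assumes mM: "m \<in> Mset w" and ml: "length m < length w"
  shows "m \<in> Kset w"
proof -
  obtain u where u: "w @ m = u @ w" and m0: "m \<noteq> []" using mM M_char by blast
  have "length u = length m" using arg_cong[OF u, of length] by simp
  hence "m \<in> autocorr0 w" using m0 ml u unfolding autocorr0_def autocorr_def by auto
  moreover have "m \<notin> {c @ v |c v. c \<in> autocorr0 w \<and> v \<noteq> []}"
  proof
    assume "m \<in> {c @ v |c v. c \<in> autocorr0 w \<and> v \<noteq> []}"
    then obtain c v c' where cv: "m = c @ v" "v \<noteq> []" "c' \<noteq> []" "w @ c = c' @ w"
      unfolding autocorr0_def autocorr_def by blast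
    hence "w @ m = c' @ w @ v" by simp
    hence "length c' \<in> occs w (w @ m)" using occ_decomp[of "w @ m" c' w v] by blast
    hence "length c' = 0 \<or> length c' + length w = length (w @ m)" using mM M_char by blast
    moreover have "length c' = length c" using arg_cong[OF cv(4), of length] by simp
    ultimately show False using cv by simp
  qed
  ultimately show "m \<in> Kset w" unfolding Kset_def by blast
qed

lemma K_char: "Kset w = {m \<in> Mset w. length m < length w}"
  using K_in_M short_M_in_K by blast

lemma K_sub_M: "Kset w \<subseteq> Mset w"
  unfolding K_char by blast

lemma M_minus_K: "Mset w - Kset w = {m \<in> Mset w. length w \<le> length m}"
  unfolding K_char by auto

section \<open>Appending words of M and U to a word ending with w\<close>

lemma occs_append_M:
  assumes v: "v = u @ w" and m: "m \<in> Mset w"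
  shows "occs w (v @ m) = insert (length v + length m - length w) (occs w v)"
proof (rule set_eqI, rule iffI)
  fix i assume i: "i \<in> occs w (v @ m)"
  show "i \<in> insert (length v + length m - length w) (occs w v)"
  proof (cases "i + length w \<le> length v")
    case True thus ?thesis using occs_append_inv_left[OF i] by auto
  next
    case False
    hence iu: "length u < i" using v by simp
    have "i - length u \<in> occs w (w @ m)"
      using occs_append_inv_right[of i w u "w @ m"] i iu v by simp
    hence "i - length u = 0 \<or> i - length u + length w = length (w @ m)" using m M_char by blast
    thus ?thesis using iu v by auto
  qed
next
  fix i assume i: "i \<in> insert (length v + length m - length w) (occs w v)"
  obtain u' where u': "w @ m = u' @ w" using m M_char by blast
  have "length m = length u'" using arg_cong[OF u', of length] by simp
  hence "length v + length m - length w \<in> occs w (v @ m)"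
    using v u' occs_end[of "u @ u'" w] by simp
  thus "i \<in> occs w (v @ m)" using i occs_append_left by auto
qed

lemma occs_append_U:
  assumes v: "v = u @ w" and x: "x \<in> Uset w"
  shows "occs w (v @ x) = occs w v"
proof (rule set_eqI, rule iffI)
  fix i assume i: "i \<in> occs w (v @ x)"
  show "i \<in> occs w v"
  proof (cases "i + length w \<le> length v")
    case True thus ?thesis using occs_append_inv_left[OF i] by auto
  next
    case False
    hence iu: "length u < i" using v by simp
    have "i - length u \<in> occs w (w @ x)"
      using occs_append_inv_right[of i w u "w @ x"] i iu v by simp
    hence "i - length u = 0" using x U_char by blast
    thus ?thesis using iu by auto
  qed
qed (rule occs_append_left)

lemma num_clumps_append_M:
  assumes L: "0 < length w" and v: "v = u @ w" and m: "m \<in> Mset w"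
  shows "num_clumps w (v @ m) = num_clumps w v + (if length m < length w then 0 else 1)"
proof -
  define n where "n = length v + length m - length w"
  have m0: "m \<noteq> []" using m M_char by blast
  have occs: "occs w (v @ m) = insert n (occs w v)" unfolding n_def by (rule occs_append_M[OF v m])
  have le: "a + length w \<le> length v" if "a \<in> occs w v" for a using occs_bound[OF that] .
  show ?thesis
  proof (cases "length m < length w")
    case True
    have "card (insert n (occs w v) // (overlaps (length w) (insert n (occs w v)))\<^sup>*) =
          card (occs w v // (overlaps (length w) (occs w v))\<^sup>*)"
    proof (rule clumps_insert_near[of "length u"])
      show "length u \<in> occs w v" using v occs_end by simp
      show "n < length u + length w" using v True unfolding n_def by simp
      show "a < n" if "a \<in> occs w v" for a using le[OF that] v m0 unfolding n_def by (cases m) auto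
    qed
    thus ?thesis using True by (simp add: num_clumps_overlaps occs)
  next
    case False
    have "card (insert n (occs w v) // (overlaps (length w) (insert n (occs w v)))\<^sup>*) =
          Suc (card (occs w v // (overlaps (length w) (occs w v))\<^sup>*))"
    proof (rule clumps_insert_far[OF occs_finite L])
      show "a + length w \<le> n" if "a \<in> occs w v" for a using le[OF that] False unfolding n_def by simp
    qed
    thus ?thesis using False by (simp add: num_clumps_overlaps occs)
  qed
qed

lemma num_clumps_append_U:
  assumes "v = u @ w" and "x \<in> Uset w"
  shows "num_clumps w (v @ x) = num_clumps w v"
  using occs_append_U[OF assms] by (simp only: num_clumps_overlaps)

section \<open>Unambiguous decompositions of languages\<close>

(* E = A* w: the words ending with w;  E_k: those with exactly k clumps;  N: the words avoiding w. *)
definition Ends :: "'a list \<Rightarrow> 'a list set" where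
  "Ends w = {v. \<exists>u. v = u @ w}"

definition Ends_clumps :: "'a list \<Rightarrow> nat \<Rightarrow> 'a list set" where
  "Ends_clumps w k = {v \<in> Ends w. num_clumps w v = k}"

definition Avoid :: "'a list \<Rightarrow> 'a list set" where
  "Avoid w = {x. occs w x = {}}"

lemma Ends_conc: "Ends w = conc UNIV {w}"
  unfolding Ends_def conc_def by blast

lemma Ends_clumps_sub: "Ends_clumps w k \<subseteq> Ends w"
  unfolding Ends_clumps_def by blast

lemma Ends_occs: "v \<in> Ends w \<Longrightarrow> occs w v \<noteq> {}"
  unfolding Ends_def using occs_end by blast

lemma Ends_clumps_0: "Ends_clumps w 0 = {}"
  unfolding Ends_clumps_def using Ends_occs num_clumps_0 by blast

lemma Ends_append_M: "v \<in> Ends w \<Longrightarrow> m \<in> Mset w \<Longrightarrow> v @ m \<in> Ends w"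
proof -
  assume "v \<in> Ends w" "m \<in> Mset w"
  then obtain u u' where "v = u @ w" "w @ m = u' @ w" using M_char[of m w] by (auto simp: Ends_def)
  thus ?thesis unfolding Ends_def by (intro CollectI exI[of _ "u @ u'"]) simp
qed

lemma shift_occ:
  assumes v1: "v1 = u1 @ w" and v2: "v2 = u2 @ w" and e: "v1 @ y1 = v2 @ y2"
    and lt: "length v1 < length v2"
  shows "\<exists>t. t \<noteq> [] \<and> y1 = t @ y2 \<and> length t \<in> occs w (w @ y1)"
proof -
  obtain t where "(v1 = v2 @ t \<and> t @ y1 = y2) \<or> (v1 @ t = v2 \<and> y1 = t @ y2)"
    using e by (auto simp: append_eq_append_conv2)
  hence t: "v1 @ t = v2" "y1 = t @ y2" using lt by auto
  hence tne: "t \<noteq> []" using lt by auto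
  have "length u2 \<in> occs w (v2 @ y2)" using v2 occs_end occs_append_left by metis
  hence "length u2 \<in> occs w (u1 @ (w @ y1))" using e v1 by simp
  moreover have "length u1 \<le> length u2" using lt v1 v2 by simp
  ultimately have "length u2 - length u1 \<in> occs w (w @ y1)"
    using occs_append_inv_right by blast
  moreover have "length u2 - length u1 = length t"
    using arg_cong[OF t(1), of length] v1 v2 by simp
  ultimately show ?thesis using tne t by auto
qed

lemma unambiguous_Ends:
  assumes S: "\<And>y1 y2 t. y1 \<in> S \<Longrightarrow> y2 \<in> S \<Longrightarrow> t \<noteq> [] \<Longrightarrow> y1 = t @ y2 \<Longrightarrow>
                length t \<in> occs w (w @ y1) \<Longrightarrow> False"
  shows "unambiguous (Ends w) S"
  unfolding unambiguous_def
proof (rule inj_onI, clarsimp simp: Ends_def)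
  fix u1 y1 u2 y2
  assume y: "y1 \<in> S" "y2 \<in> S" and e: "u1 @ w @ y1 = u2 @ w @ y2"
  have "\<not> length (u1 @ w) < length (u2 @ w)"
    using shift_occ[of "u1 @ w" u1 w "u2 @ w" u2 y1 y2] e S y by auto
  moreover have "\<not> length (u2 @ w) < length (u1 @ w)"
    using shift_occ[of "u2 @ w" u2 w "u1 @ w" u1 y2 y1] e S y by auto
  ultimately have "length u1 = length u2" by simp
  thus "u1 = u2 \<and> y1 = y2" using e by auto
qed

lemma unambiguous_Ends_U: "unambiguous (Ends w) (Uset w)"
  by (rule unambiguous_Ends) (auto simp: U_char)

lemma unambiguous_Ends_M: "unambiguous (Ends w) (Mset w)"
proof (rule unambiguous_Ends)
  fix y1 y2 t assume h: "y1 \<in> Mset w" "y2 \<in> Mset w" "t \<noteq> []" "y1 = t @ y2"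
    "length t \<in> occs w (w @ y1)"
  hence "length t = 0 \<or> length t + length w = length (w @ y1)" using M_char by blast
  moreover have "y2 \<noteq> []" using h(2) M_char by blast
  ultimately show False using h by auto
qed

lemma unambiguous_R_C: "unambiguous (Rset w) (autocorr w)"
proof -
  have no_prefix: False if r1: "r1 \<in> Rset w" and r2: "r2 \<in> Rset w" and e: "r1 @ e1 = r2 @ e2"
    and lt: "length r1 < length r2" for r1 r2 e1 e2 :: "'a list"
  proof -
    obtain t where "(r1 = r2 @ t \<and> t @ e1 = e2) \<or> (r1 @ t = r2 \<and> e1 = t @ e2)"
      using e by (auto simp: append_eq_append_conv2)
    hence t: "r2 = r1 @ t" "t \<noteq> []" using lt by auto
    obtain u where u: "r1 = u @ w" using r1 R_char by blast
    have "length u \<in> occs w r2" using t u occs_end occs_append_left by metis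
    hence "length u + length w = length r2" using r2 R_char by blast
    thus False using t u by simp
  qed
  show ?thesis
    unfolding unambiguous_def
  proof (rule inj_onI, clarsimp)
    fix r1 e1 r2 e2
    assume h: "r1 \<in> Rset w" "r2 \<in> Rset w" "r1 @ e1 = r2 @ e2"
    hence "length r1 = length r2"
      using no_prefix[OF h(1,2,3)] no_prefix[OF h(2,1) h(3)[symmetric]] by (meson linorder_neqE_nat)
    thus "r1 = r2 \<and> e1 = e2" using h(3) by simp
  qed
qed

lemma split_last_occurrence:
  assumes k: "num_clumps w x = k" "1 \<le> k"
  shows "x \<in> conc (Ends_clumps w k) (Uset w)"
proof -
  have ne: "occs w x \<noteq> {}" using k num_clumps_0[of w x] by auto
  define i where "i = Max (occs w x)"
  have i: "i \<in> occs w x" using Max_in[OF occs_finite ne] unfolding i_def .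
  have imax: "j \<le> i" if "j \<in> occs w x" for j using Max_ge[OF occs_finite that] unfolding i_def .
  define v where "v = take i x @ w"
  define y where "y = drop (i + length w) x"
  have xe: "x = v @ y" unfolding v_def y_def using occ_split[OF i] by simp
  have li: "length (take i x) = i" using occs_bound[OF i] by simp
  have yU: "y \<in> Uset w"
    unfolding U_char
  proof
    fix j assume "j \<in> occs w (w @ y)"
    hence "length (take i x) + j \<in> occs w (take i x @ (w @ y))" by (rule occs_append_shift)
    hence "i + j \<in> occs w x" using li xe unfolding v_def by simp
    thus "j = 0" using imax by fastforce
  qed
  have "num_clumps w v = k" using num_clumps_append_U[OF v_def yU] k xe by simp
  hence "v \<in> Ends_clumps w k" by (auto simp: Ends_clumps_def Ends_def v_def)
  thus ?thesis using yU xe by (rule concI)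
qed

lemma clumps_eq_conc:
  assumes k: "1 \<le> k"
  shows "{x. num_clumps w x = k} = conc (Ends_clumps w k) (Uset w)"
proof
  show "{x. num_clumps w x = k} \<subseteq> conc (Ends_clumps w k) (Uset w)"
    using split_last_occurrence[OF _ k] by blast
  show "conc (Ends_clumps w k) (Uset w) \<subseteq> {x. num_clumps w x = k}"
  proof
    fix x assume "x \<in> conc (Ends_clumps w k) (Uset w)"
    then obtain v y where x: "x = v @ y" and v: "v \<in> Ends_clumps w k" and y: "y \<in> Uset w"
      by (rule concE)
    then obtain u where "v = u @ w" "num_clumps w v = k" by (auto simp: Ends_clumps_def Ends_def)
    thus "x \<in> {x. num_clumps w x = k}" using num_clumps_append_U[OF _ y] x by simp
  qed
qed

lemma split_second_last_occurrence:
  assumes u: "v = u @ w" and other: "occs w v \<noteq> {length u}"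
  shows "\<exists>v' m. v = v' @ m \<and> v' \<in> Ends w \<and> m \<in> Mset w"
proof -
  have lu: "length u \<in> occs w v" using u occs_end by simp
  define S where "S = occs w v - {length u}"
  have Sne: "S \<noteq> {}" using other lu unfolding S_def by blast
  have Sfin: "finite S" unfolding S_def using occs_finite by simp
  define i where "i = Max S"
  have io: "i \<in> occs w v" and iu: "i \<noteq> length u"
    using Max_in[OF Sfin Sne] unfolding i_def S_def by auto
  have imax: "j \<le> i" if "j \<in> occs w v" "j \<noteq> length u" for j
    using Max_ge[OF Sfin] that unfolding i_def S_def by blast
  have ilt: "i < length u" using occs_bound[OF io] iu u by simp
  define m where "m = drop (i + length w) v"
  have vsplit: "v = take i v @ w @ m" unfolding m_def by (rule occ_split[OF io])
  have lti: "length (take i v) = i" using ilt u by simp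
  have lm: "length m = length u - i" unfolding m_def using u by simp
  have dv: "drop i v = w @ m" using vsplit lti by (metis append_eq_conv_conj)
  have "drop i v = drop i u @ w" using u ilt by simp
  hence ends: "\<exists>u'. w @ m = u' @ w" using dv by metis
  have inner: "j = 0 \<or> j + length w = length (w @ m)" if j: "j \<in> occs w (w @ m)" for j
  proof -
    have "length (take i v) + j \<in> occs w (take i v @ (w @ m))" by (rule occs_append_shift[OF j])
    hence ij: "i + j \<in> occs w v" using vsplit lti by simp
    show ?thesis
    proof (cases "i + j = length u")
      case True thus ?thesis using lm ilt by simp
    next
      case False thus ?thesis using imax[OF ij False] by simp
    qed
  qed
  have "m \<noteq> []" using lm ilt by auto
  hence "m \<in> Mset w" using ends inner M_char by blast
  moreover have "v = (take i v @ w) @ m" "take i v @ w \<in> Ends w"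
    using vsplit by (auto simp: Ends_def)
  ultimately show ?thesis by blast
qed

lemma Ends_clumps_append_M:
  assumes L: "0 < length w" and v: "v \<in> Ends_clumps w k" and m: "m \<in> Mset w"
  shows "v @ m \<in> Ends_clumps w (k + (if length m < length w then 0 else 1))"
proof -
  from v obtain u where u: "v = u @ w" and nc: "num_clumps w v = k"
    unfolding Ends_clumps_def Ends_def by blast
  have "v @ m \<in> Ends w" using Ends_append_M[OF _ m] v Ends_clumps_sub by blast
  thus ?thesis using num_clumps_append_M[OF L u m] nc by (simp add: Ends_clumps_def)
qed

lemma Ends_clumps_decompose:
  assumes L: "0 < length w" and v: "v \<in> Ends_clumps w (Suc j)"
  shows "v \<in> ((if j = 0 then Rset w else {}) \<union> conc (Ends_clumps w (Suc j)) (Kset w))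
           \<union> conc (Ends_clumps w j) (Mset w - Kset w)"
proof -
  obtain u where u: "v = u @ w" and nc: "num_clumps w v = Suc j"
    using v unfolding Ends_clumps_def Ends_def by blast
  show ?thesis
  proof (cases "occs w v = {length u}")
    case True
    hence "\<forall>i\<in>occs w v. i + length w = length v" using u by simp
    hence "v \<in> Rset w" using u R_char by blast
    moreover have "j = 0" using num_clumps_single[OF True] nc by simp
    ultimately show ?thesis by simp
  next
    case False
    then obtain v' m where vm: "v = v' @ m" and v': "v' \<in> Ends w" and m: "m \<in> Mset w"
      using split_second_last_occurrence[OF u] by blast
    obtain u' where u': "v' = u' @ w" using v' by (auto simp: Ends_def)
    have ncv: "num_clumps w v = num_clumps w v' + (if length m < length w then 0 else 1)"
      using num_clumps_append_M[OF L u' m] vm by simp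
    show ?thesis
    proof (cases "length m < length w")
      case True
      hence "m \<in> Kset w" using m K_char by blast
      moreover have "v' \<in> Ends_clumps w (Suc j)" using v' ncv nc True by (simp add: Ends_clumps_def)
      ultimately show ?thesis using vm by (blast intro: concI)
    next
      case False
      hence "m \<in> Mset w - Kset w" using m unfolding M_minus_K by simp
      moreover have "v' \<in> Ends_clumps w j" using v' ncv nc False by (simp add: Ends_clumps_def)
      ultimately show ?thesis using vm by (blast intro: concI)
    qed
  qed
qed

lemma Ends_clumps_rec:
  assumes L: "0 < length w"
  shows "Ends_clumps w (Suc j) = ((if j = 0 then Rset w else {}) \<union> conc (Ends_clumps w (Suc j)) (Kset w))
           \<union> conc (Ends_clumps w j) (Mset w - Kset w)" (is "_ = ?rhs")
proof (intro equalityI subsetI)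
  fix v assume "v \<in> Ends_clumps w (Suc j)"
  thus "v \<in> ?rhs" by (rule Ends_clumps_decompose[OF L])
next
  fix x assume x: "x \<in> ?rhs"
  have "x \<in> Ends_clumps w (Suc j)" if "j = 0" "x \<in> Rset w"
  proof -
    have "x \<in> Ends w" using that(2) R_char[of x w] by (simp add: Ends_def)
    thus ?thesis using num_clumps_single[OF R_occs[OF that(2)]] that(1) by (simp add: Ends_clumps_def)
  qed
  moreover have "x \<in> Ends_clumps w (Suc j)" if "x \<in> conc (Ends_clumps w (Suc j)) (Kset w)"
  proof -
    from that obtain v m where "v \<in> Ends_clumps w (Suc j)" "m \<in> Kset w" "x = v @ m" by (rule concE)
    moreover have "m \<in> Mset w" "length m < length w" using \<open>m \<in> Kset w\<close> K_char by blast+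
    ultimately show ?thesis using Ends_clumps_append_M[OF L, of v "Suc j" m] by simp
  qed
  moreover have "x \<in> Ends_clumps w (Suc j)" if "x \<in> conc (Ends_clumps w j) (Mset w - Kset w)"
  proof -
    from that obtain v m where "v \<in> Ends_clumps w j" "m \<in> Mset w - Kset w" "x = v @ m" by (rule concE)
    moreover have "m \<in> Mset w" "\<not> length m < length w" using \<open>m \<in> Mset w - Kset w\<close> unfolding M_minus_K by auto
    ultimately show ?thesis using Ends_clumps_append_M[OF L, of v j m] by simp
  qed
  ultimately show "x \<in> Ends_clumps w (Suc j)" using x by (auto split: if_splits)
qed

(* A word of E M has at least two occurrences, so it is never in R. *)
lemma Ends_M_disjoint_R: "Rset w \<inter> conc (Ends w) (Mset w) = {}"
proof -
  have "x \<notin> Rset w" if "x \<in> conc (Ends w) (Mset w)" for x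
  proof
    assume xR: "x \<in> Rset w"
    from that obtain v m where vm: "v \<in> Ends w" "m \<in> Mset w" "x = v @ m" by (rule concE)
    then obtain u where u: "v = u @ w" unfolding Ends_def by blast
    have "length u \<in> occs w x" using u vm(3) occs_end occs_append_left by metis
    moreover have "length v + length m - length w \<in> occs w x"
      using occs_append_M[OF u vm(2)] vm(3) by simp
    moreover have "m \<noteq> []" using vm(2) M_char by blast
    ultimately show False using R_occs[OF xR] u by auto
  qed
  thus ?thesis by blast
qed

lemma butlast_Avoid:
  assumes x: "x \<in> Avoid w \<union> Rset w" and ne: "x \<noteq> []"
  shows "butlast x \<in> Avoid w"
proof -
  have "False" if i: "i \<in> occs w (butlast x)" for i
  proof -
    have xs: "x = butlast x @ [last x]" using ne by simp
    have i2: "i \<in> occs w x" using occs_append_left[OF i, of "[last x]"] xs by simp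
    have "i + length w < length x" using occs_bound[OF i] ne by (cases x rule: rev_cases) auto
    moreover have "x \<in> Rset w" using x i2 by (auto simp: Avoid_def)
    ultimately show False using i2 R_char by fastforce
  qed
  thus ?thesis by (auto simp: Avoid_def)
qed

lemma Avoid_snoc:
  assumes y: "y \<in> Avoid w" and b: "length b = 1"
  shows "y @ b \<in> Avoid w \<union> Rset w"
proof (cases "occs w (y @ b) = {}")
  case True thus ?thesis by (simp add: Avoid_def)
next
  case False
  have last: "i + length w = length (y @ b)" if i: "i \<in> occs w (y @ b)" for i
  proof (rule ccontr)
    assume "i + length w \<noteq> length (y @ b)"
    hence "i + length w \<le> length y" using occs_bound[OF i] b by simp
    hence "i \<in> occs w y" using occs_append_inv_left i by blast
    thus False using y unfolding Avoid_def by blast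
  qed
  obtain i where i: "i \<in> occs w (y @ b)" using False by blast
  have "length w \<le> length (y @ b) \<and> length (y @ b) - length w \<in> occs w (y @ b)"
    using last[OF i] i by (metis add_diff_cancel_right' le_add2)
  hence "\<exists>u. y @ b = u @ w" using ends_with_iff by blast
  hence "y @ b \<in> Rset w" using last R_char by blast
  thus ?thesis by blast
qed

lemma Avoid_R_eq:
  assumes L: "0 < length w"
  shows "Avoid w \<union> Rset w = {[]} \<union> conc (Avoid w) {x. length x = 1}"
proof (intro equalityI subsetI)
  fix x assume x: "x \<in> Avoid w \<union> Rset w"
  show "x \<in> {[]} \<union> conc (Avoid w) {x. length x = 1}"
  proof (cases "x = []")
    case False
    hence "x \<in> conc (Avoid w) {x. length x = 1}"
      using concI[OF butlast_Avoid[OF x False], of "[last x]"] by simp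
    thus ?thesis by blast
  qed simp
next
  fix x assume x: "x \<in> {[]} \<union> conc (Avoid w) {x. length x = 1}"
  show "x \<in> Avoid w \<union> Rset w"
  proof (cases "x = []")
    case True thus ?thesis using occs_Nil[OF L] by (simp add: Avoid_def)
  next
    case False
    with x have "x \<in> conc (Avoid w) {x. length x = 1}" by blast
    then obtain y b where "y \<in> Avoid w" "b \<in> {x. length x = 1}" "x = y @ b" by (rule concE)
    thus ?thesis using Avoid_snoc by blast
  qed
qed

lemma Avoid_R_disjoint: "Avoid w \<inter> Rset w = {}"
  using occs_end by (fastforce simp: Avoid_def R_char)

(* Equation (b): N w = R C, cutting N w after the first occurrence of w. *)
lemma Avoid_w_sub_R_C:
  assumes L: "0 < length w" and xN: "x \<in> Avoid w"
  shows "x @ w \<in> conc (Rset w) (autocorr w)"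
proof -
  define z where "z = x @ w"
  have ne: "occs w z \<noteq> {}" using occs_end unfolding z_def by blast
  define i where "i = Min (occs w z)"
  have io: "i \<in> occs w z" unfolding i_def using Min_in[OF occs_finite ne] .
  have imin: "i \<le> j" if "j \<in> occs w z" for j unfolding i_def using Min_le[OF occs_finite that] .
  have ix: "length x < i + length w"
  proof (rule ccontr)
    assume "\<not> length x < i + length w"
    hence "i \<in> occs w x" using occs_append_inv_left[of i w x w] io unfolding z_def by simp
    thus False using xN unfolding Avoid_def by blast
  qed
  have ilx: "i \<le> length x" using occs_bound[OF io] unfolding z_def by simp
  define e where "e = drop (i + length w) z"
  define r where "r = take i z @ w"
  have zs: "z = take i z @ w @ e" unfolding e_def by (rule occ_split[OF io])
  have zre: "z = r @ e" using zs unfolding r_def by simp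
  have lti: "length (take i z) = i" using ilx unfolding z_def by simp
  have "j + length w = length r" if j: "j \<in> occs w r" for j
  proof -
    have "j \<in> occs w z" using occs_append_left[OF j] zre by simp
    thus ?thesis using imin occs_bound[OF j] lti unfolding r_def by fastforce
  qed
  hence rR: "r \<in> Rset w" unfolding r_def using R_char by blast
  have le: "length e = length x - i" unfolding e_def z_def by simp
  have eC: "e \<in> autocorr w"
  proof (cases "e = []")
    case True thus ?thesis by (simp add: autocorr_def)
  next
    case False
    have "drop i z = w @ e" using zs lti by (metis append_eq_conv_conj)
    moreover have "drop i z = drop i x @ w" using ilx unfolding z_def by simp
    ultimately have "w @ e = drop i x @ w" by simp
    moreover have "drop i x \<noteq> []" using False le ilx by auto
    moreover have "length e < length w" using le ix L by arith
    ultimately show ?thesis using False unfolding autocorr_def by blast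
  qed
  show ?thesis using concI[OF rR eC zre] unfolding z_def .
qed

lemma R_C_sub_Avoid_w:
  assumes L: "0 < length w" and rR: "r \<in> Rset w" and eC: "e \<in> autocorr w"
  shows "r @ e \<in> conc (Avoid w) {w}"
proof -
  obtain u where u: "r = u @ w" using rR R_char by blast
  have last: "\<And>j. j \<in> occs w r \<Longrightarrow> j + length w = length r" using rR R_char by blast
  obtain e' where e': "w @ e = e' @ w" "length e < length w"
  proof (cases "e = []")
    case True thus ?thesis using that[of "[]"] L by simp
  next
    case False thus ?thesis using eC that unfolding autocorr_def by blast
  qed
  have le': "length e' = length e" using arg_cong[OF e'(1), of length] by simp
  define x where "x = u @ e'"
  have zx: "r @ e = x @ w" using u e'(1) unfolding x_def by simp
  have "False" if j: "j \<in> occs w x" for j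
  proof -
    have jl: "j + length w \<le> length x" using occs_bound[OF j] .
    have "j \<in> occs w (r @ e)" using occs_append_left[OF j] zx by simp
    hence "j \<in> occs w r" using occs_append_inv_left[of j w r e] jl le' e'(2) u unfolding x_def by simp
    hence "j + length w = length r" by (rule last)
    thus False using jl le' e'(2) u unfolding x_def by simp
  qed
  hence "x \<in> Avoid w" by (auto simp: Avoid_def)
  thus ?thesis using zx by (intro concI) auto
qed

lemma Avoid_w_eq_R_C:
  assumes L: "0 < length w"
  shows "conc (Avoid w) {w} = conc (Rset w) (autocorr w)"
proof (intro equalityI subsetI)
  fix z assume "z \<in> conc (Avoid w) {w}"
  then obtain x b where "x \<in> Avoid w" "b \<in> {w}" "z = x @ b" by (rule concE)
  thus "z \<in> conc (Rset w) (autocorr w)" using Avoid_w_sub_R_C[OF L] by blast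
next
  fix z assume "z \<in> conc (Rset w) (autocorr w)"
  then obtain r e where "r \<in> Rset w" "e \<in> autocorr w" "z = r @ e" by (rule concE)
  thus "z \<in> conc (Avoid w) {w}" using R_C_sub_Avoid_w[OF L] by blast
qed

lemma all_words_eq: "UNIV = Avoid w \<union> conc (Ends w) (Uset w)"
proof -
  have "x \<in> conc (Ends w) (Uset w)" if "x \<notin> Avoid w" for x
  proof -
    have "num_clumps w x \<noteq> 0" using that unfolding num_clumps_0 by (simp add: Avoid_def)
    hence "x \<in> conc (Ends_clumps w (num_clumps w x)) (Uset w)"
      using split_last_occurrence[OF refl, of w x] by simp
    thus ?thesis using conc_mono[OF Ends_clumps_sub order_refl] by blast
  qed
  thus ?thesis by blast
qed

lemma Avoid_disjoint_Ends_U: "Avoid w \<inter> conc (Ends w) (Uset w) = {}"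
  using Ends_occs occs_append_left by (fastforce simp: Avoid_def elim!: concE)

lemma U_snoc:
  assumes u: "u \<in> Uset w" and nU: "u @ [a] \<notin> Uset w"
  shows "u @ [a] \<in> Mset w"
proof -
  define z where "z = u @ [a]"
  have uc: "\<forall>j\<in>occs w (w @ u). j = 0" using u U_char[of u w] by simp
  have all: "j = 0 \<or> j + length w = length (w @ z)" if j: "j \<in> occs w (w @ z)" for j
  proof (rule ccontr)
    assume a1: "\<not> (j = 0 \<or> j + length w = length (w @ z))"
    hence "j + length w \<le> length (w @ u)" using occs_bound[OF j] unfolding z_def by simp
    moreover have "j \<in> occs w ((w @ u) @ [a])" using j unfolding z_def by simp
    ultimately have "j \<in> occs w (w @ u)" using occs_append_inv_left by blast
    thus False using uc a1 by blast
  qed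
  have "\<not> (\<forall>j\<in>occs w (w @ z). j = 0)" using nU U_char[of z w] unfolding z_def by simp
  then obtain j where j: "j \<in> occs w (w @ z)" "j \<noteq> 0" by blast
  hence "length (w @ z) - length w = j" using all[OF j(1)] by simp
  hence "length w \<le> length (w @ z) \<and> length (w @ z) - length w \<in> occs w (w @ z)"
    using j(1) by simp
  hence "\<exists>u'. w @ z = u' @ w" using ends_with_iff by blast
  thus ?thesis using all M_char[of z w] unfolding z_def by simp
qed

lemma butlast_U:
  assumes z: "z \<in> (Uset w - {[]}) \<union> Mset w"
  shows "z \<noteq> []" and "butlast z \<in> Uset w"
proof -
  show zne: "z \<noteq> []" using z M_char[of z w] by auto
  have zs: "z = butlast z @ [last z]" using zne by simp
  have "j = 0" if j: "j \<in> occs w (w @ butlast z)" for j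
  proof -
    have jl: "j + length w \<le> length (w @ butlast z)" using occs_bound[OF j] .
    have j2: "j \<in> occs w (w @ z)"
      using occs_append_left[OF j, of "[last z]"] zs by (metis append.assoc)
    show "j = 0"
    proof (cases "z \<in> Mset w")
      case True
      hence "j = 0 \<or> j + length w = length (w @ z)" using j2 M_char[of z w] by simp
      thus ?thesis using jl zne by (cases z rule: rev_cases) auto
    next
      case False
      hence "z \<in> Uset w" using z by blast
      thus ?thesis using j2 U_char[of z w] by simp
    qed
  qed
  thus "butlast z \<in> Uset w" using U_char[of "butlast z" w] by simp
qed

lemma U_letter_eq: "conc (Uset w) {x. length x = 1} = (Uset w - {[]}) \<union> Mset w"
proof (intro equalityI subsetI)
  fix z assume "z \<in> conc (Uset w) {x. length x = 1}"
  then obtain u b where u: "u \<in> Uset w" and b: "b \<in> {x. length x = 1}" and z: "z = u @ b"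
    by (rule concE)
  obtain a where "b = [a]" using b by (cases b) auto
  thus "z \<in> (Uset w - {[]}) \<union> Mset w" using U_snoc[OF u] z by blast
next
  fix z assume z: "z \<in> (Uset w - {[]}) \<union> Mset w"
  have zs: "z = butlast z @ [last z]" using butlast_U(1)[OF z] by simp
  show "z \<in> conc (Uset w) {x. length x = 1}" using concI[OF butlast_U(2)[OF z] _ zs] by simp
qed

lemma U_disjoint_M: "(Uset w - {[]}) \<inter> Mset w = {}"
proof -
  have "m \<notin> Uset w" if m: "m \<in> Mset w" for m
  proof
    assume mU: "m \<in> Uset w"
    obtain u where u: "w @ m = u @ w" using m M_char by blast
    have "length u \<in> occs w (w @ m)" using u occs_end by simp
    hence "length u = 0" using mU U_char by blast
    moreover have "length u = length m" using arg_cong[OF u, of length] by simp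
    moreover have "m \<noteq> []" using m M_char by blast
    ultimately show False by simp
  qed
  thus ?thesis by blast
qed

section \<open>The power series identities\<close>

locale bernoulli_pattern =
  fixes p :: "'a::finite \<Rightarrow> real" and w :: "'a list"
  assumes L: "0 < length w" and p_sum: "(\<Sum>a\<in>UNIV. p a) = 1" and p_pos: "\<And>a. p a > 0"
begin

abbreviation G :: "'a list set \<Rightarrow> real fps" where "G \<equiv> lang_gf p"

abbreviation Pw :: "real fps" where "Pw \<equiv> fps_const (wprob p w) * fps_X ^ length w"

lemma gf_Avoid_R: "G (Avoid w) + G (Rset w) = 1 + G (Avoid w) * fps_X"
proof -
  have "G (Avoid w) + G (Rset w) = G (Avoid w \<union> Rset w)"
    by (rule lang_gf_union[symmetric]) (rule Avoid_R_disjoint)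
  also have "\<dots> = G ({[]} \<union> conc (Avoid w) {x. length x = 1})" by (simp only: Avoid_R_eq[OF L])
  also have "\<dots> = G {[]} + G (conc (Avoid w) {x. length x = 1})"
    by (rule lang_gf_union) (auto elim: concE)
  also have "\<dots> = 1 + G (Avoid w) * fps_X"
    by (simp add: lang_gf_Nil lang_gf_conc[OF unambiguous_fixed_length] lang_gf_letters[OF p_sum, simplified])
  finally show ?thesis .
qed

lemma gf_Avoid_w: "G (Avoid w) * Pw = G (Rset w) * G (autocorr w)"
  using arg_cong[OF Avoid_w_eq_R_C[OF L], of G]
  by (simp add: lang_gf_conc[OF unambiguous_single] lang_gf_conc[OF unambiguous_R_C] lang_gf_single)

lemma gf_all_words: "G UNIV = G (Avoid w) + G UNIV * Pw * G (Uset w)"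
proof -
  have "G UNIV = G (Avoid w \<union> conc (Ends w) (Uset w))" by (rule arg_cong[OF all_words_eq])
  also have "\<dots> = G (Avoid w) + G (Ends w) * G (Uset w)"
    by (simp add: lang_gf_union[OF Avoid_disjoint_Ends_U] lang_gf_conc[OF unambiguous_Ends_U])
  also have "G (Ends w) = G UNIV * Pw"
    unfolding Ends_conc by (simp add: lang_gf_conc[OF unambiguous_single] lang_gf_single)
  finally show ?thesis .
qed

lemma gf_U_letter: "G (Uset w) * fps_X = G (Uset w) - 1 + G (Mset w)"
proof -
  have "G (Uset w) * fps_X = G (conc (Uset w) {x. length x = 1})"
    by (simp add: lang_gf_conc[OF unambiguous_fixed_length] lang_gf_letters[OF p_sum, simplified])
  also have "\<dots> = G (Uset w - {[]}) + G (Mset w)"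
    by (simp only: U_letter_eq lang_gf_union[OF U_disjoint_M])
  also have "G (Uset w - {[]}) = G (Uset w) - 1"
    using lang_gf_diff[of "{[]}" "Uset w" p] Nil_in_U[OF L] by (simp add: lang_gf_Nil)
  finally show ?thesis by simp
qed

lemma gf_Ends_clumps_rec:
  "G (Ends_clumps w (Suc j)) = (if j = 0 then G (Rset w) else 0)
     + G (Ends_clumps w (Suc j)) * G (Kset w) + G (Ends_clumps w j) * (G (Mset w) - G (Kset w))"
proof -
  define A where "A = (if j = 0 then Rset w else {})"
  define EK where "EK = conc (Ends_clumps w (Suc j)) (Kset w)"
  define EM where "EM = conc (Ends_clumps w j) (Mset w - Kset w)"
  have EM: "unambiguous (Ends w) (Mset w)" by (rule unambiguous_Ends_M)
  have "A \<inter> conc (Ends w) (Mset w) = {}" using Ends_M_disjoint_R by (auto simp: A_def)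
  moreover have "EK \<union> EM \<subseteq> conc (Ends w) (Mset w)"
    unfolding EK_def EM_def using conc_mono[OF Ends_clumps_sub K_sub_M] conc_mono[OF Ends_clumps_sub]
    by blast
  ultimately have d1: "A \<inter> EK = {}" and d2: "(A \<union> EK) \<inter> EM = {}"
    using unambiguous_conc_disjoint[OF EM Ends_clumps_sub Ends_clumps_sub K_sub_M, of "Mset w - Kset w"]
    unfolding EK_def EM_def by blast+
  have "G (Ends_clumps w (Suc j)) = G (A \<union> EK \<union> EM)"
    using Ends_clumps_rec[OF L, of j] unfolding A_def EK_def EM_def by simp
  also have "\<dots> = G A + G EK + G EM" by (simp add: lang_gf_union[OF d2] lang_gf_union[OF d1])
  also have "G EK = G (Ends_clumps w (Suc j)) * G (Kset w)"
    unfolding EK_def by (rule lang_gf_conc, rule unambiguous_subset[OF EM Ends_clumps_sub K_sub_M])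
  also have "G EM = G (Ends_clumps w j) * (G (Mset w) - G (Kset w))"
    unfolding EM_def using unambiguous_subset[OF EM Ends_clumps_sub, of "Mset w - Kset w"]
    by (simp add: lang_gf_conc lang_gf_diff[OF K_sub_M])
  also have "G A = (if j = 0 then G (Rset w) else 0)" by (simp add: A_def lang_gf_empty)
  finally show ?thesis .
qed

lemma gf_Ends_clumps:
  "G (Ends_clumps w (Suc j)) * (1 - G (Kset w)) ^ Suc j = G (Rset w) * (G (Mset w) - G (Kset w)) ^ j"
proof (induction j)
  case 0
  show ?case using gf_Ends_clumps_rec[of 0] by (simp add: Ends_clumps_0 lang_gf_empty algebra_simps)
next
  case (Suc j)
  have step: "G (Ends_clumps w (Suc (Suc j))) * (1 - G (Kset w)) =
      G (Ends_clumps w (Suc j)) * (G (Mset w) - G (Kset w))"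
    using gf_Ends_clumps_rec[of "Suc j"] by (simp add: algebra_simps)
  have "G (Ends_clumps w (Suc (Suc j))) * (1 - G (Kset w)) ^ Suc (Suc j)
      = (G (Ends_clumps w (Suc (Suc j))) * (1 - G (Kset w))) * (1 - G (Kset w)) ^ Suc j"
    by (simp only: power_Suc[of _ "Suc j"] mult.assoc)
  also have "\<dots> = (G (Ends_clumps w (Suc j)) * (G (Mset w) - G (Kset w))) * (1 - G (Kset w)) ^ Suc j"
    by (simp only: step)
  also have "\<dots> = (G (Ends_clumps w (Suc j)) * (1 - G (Kset w)) ^ Suc j) * (G (Mset w) - G (Kset w))"
    by (simp only: mult_ac)
  also have "\<dots> = G (Rset w) * (G (Mset w) - G (Kset w)) ^ Suc j" using Suc by (simp add: mult_ac)
  finally show ?case .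
qed

lemma Pw_nonzero: "Pw \<noteq> 0"
proof
  assume "Pw = 0"
  hence "fps_nth Pw (length w) = 0" by simp
  thus False using wprob_pos[of p w] p_pos by (simp add: fps_X_power_nth)
qed

lemma R_times_D: "G (Rset w) * D_gf p w = Pw"
proof -
  have "G (Rset w) * D_gf p w = G (Rset w) * Pw + (1 - fps_X) * (G (Avoid w) * Pw)"
    by (simp add: D_gf_def gf_Avoid_w algebra_simps)
  also have "\<dots> = Pw * (G (Avoid w) + G (Rset w) - G (Avoid w) * fps_X)" by (simp add: algebra_simps)
  also have "\<dots> = Pw" by (simp add: gf_Avoid_R)
  finally show ?thesis .
qed

lemma U_times_D: "G (Uset w) * D_gf p w = 1"
proof -
  have all: "G UNIV * (1 - fps_X) = 1" by (rule lang_gf_all_words[OF p_sum])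
  have "1 = G UNIV * (1 - fps_X)" using all by simp
  also have "\<dots> = G (Avoid w) * (1 - fps_X) + (G UNIV * (1 - fps_X)) * Pw * G (Uset w)"
    by (subst gf_all_words) (simp add: algebra_simps)
  also have "\<dots> = G (Avoid w) * (1 - fps_X) + Pw * G (Uset w)" by (simp add: all)
  finally have "Pw * G (Uset w) = G (Rset w)" using gf_Avoid_R by (simp add: algebra_simps)
  hence "Pw * (G (Uset w) * D_gf p w) = Pw * 1" using R_times_D by (simp add: mult.assoc[symmetric])
  thus ?thesis using Pw_nonzero by simp
qed

lemma M_times_D: "G (Mset w) * D_gf p w = D_gf p w + fps_X - 1"
proof -
  have M: "G (Mset w) = G (Uset w) * fps_X - G (Uset w) + 1" using gf_U_letter by (simp add: algebra_simps)
  have "G (Mset w) * D_gf p w = (G (Uset w) * fps_X - G (Uset w) + 1) * D_gf p w" by (simp only: M)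
  also have "\<dots> = (G (Uset w) * D_gf p w) * fps_X - G (Uset w) * D_gf p w + D_gf p w"
    by (simp add: algebra_simps)
  finally show ?thesis using U_times_D by simp
qed

(* K has no empty word and C contains it, so 1 - K and D are invertible. *)
lemma K_unit: "is_unit (1 - G (Kset w))"
proof -
  have "{x \<in> Kset w. length x = 0} = {}" by (auto simp: Kset_def autocorr0_def)
  hence "fps_nth (G (Kset w)) 0 = 0" by (simp only: lang_gf_nth) simp
  thus ?thesis by simp
qed

lemma D_unit: "is_unit (D_gf p w)"
proof -
  have "{x \<in> autocorr w. length x = 0} = {[]}" by (auto simp: autocorr_def)
  thus ?thesis using L by (simp add: D_gf_def lang_gf_nth wprob_def fps_X_power_nth)
qed

lemma H_times_denominator:
  assumes k: "1 \<le> k"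
  shows "H_gf p w k * (1 - G (Kset w)) ^ k = G (Rset w) * G (Uset w) * (G (Mset w) - G (Kset w)) ^ (k - 1)"
proof -
  obtain j where kj: "k = Suc j" using k by (cases k) auto
  have "H_gf p w k = G (Ends_clumps w k) * G (Uset w)"
    unfolding H_gf_def clumps_eq_conc[OF k]
    by (rule lang_gf_conc, rule unambiguous_subset[OF unambiguous_Ends_U Ends_clumps_sub order_refl])
  thus ?thesis using gf_Ends_clumps[of j] unfolding kj by (simp add: mult_ac)
qed

lemma H_times_denominator_D:
  assumes k: "1 \<le> k"
  shows "H_gf p w k * ((1 - G (Kset w)) ^ k * D_gf p w ^ (k + 1))
       = Pw * (fps_X - 1 + (1 - G (Kset w)) * D_gf p w) ^ (k - 1)"
proof -
  obtain j where kj: "k = Suc j" using k by (cases k) auto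
  let ?K = "G (Kset w)" and ?D = "D_gf p w"
  have "H_gf p w k * ((1 - ?K) ^ k * ?D ^ (k + 1)) = (H_gf p w k * (1 - ?K) ^ k) * ?D ^ (j + 2)"
    by (simp add: kj mult.assoc)
  also have "\<dots> = G (Rset w) * G (Uset w) * (G (Mset w) - ?K) ^ j * ?D ^ (j + 2)"
    using H_times_denominator[OF k] kj by simp
  also have "\<dots> = (G (Rset w) * ?D) * (G (Uset w) * ?D) * ((G (Mset w) - ?K) * ?D) ^ j"
    by (simp add: power_mult_distrib power_add mult_ac power2_eq_square)
  also have "(G (Mset w) - ?K) * ?D = fps_X - 1 + (1 - ?K) * ?D"
    using M_times_D by (simp add: algebra_simps)
  finally show ?thesis using R_times_D U_times_D kj by simp
qed

end

theorem mainTheorem8: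
  fixes p :: "'a::finite \<Rightarrow> real" and w :: "'a list" and k :: nat
  assumes "CARD('a) \<ge> 2"
    and "\<And>a. p a > 0"
    and "(\<Sum>a\<in>UNIV. p a) = 1"
    and "length w \<ge> 2"
    and "k \<ge> 1"
  shows "H_gf p w k =
           lang_gf p (Rset w) * lang_gf p (Uset w) * (lang_gf p (Mset w) - lang_gf p (Kset w)) ^ (k - 1)
           / (1 - lang_gf p (Kset w)) ^ k
       \<and> H_gf p w k =
           fps_const (wprob p w) * fps_X ^ length w
             * (fps_X - 1 + (1 - lang_gf p (Kset w)) * D_gf p w) ^ (k - 1)
           / ((1 - lang_gf p (Kset w)) ^ k * D_gf p w ^ (k + 1))"
proof -
  interpret bernoulli_pattern p w
    using assms(2-4) by unfold_locales linarith+
  have units: "is_unit ((1 - G (Kset w)) ^ k)" "is_unit ((1 - G (Kset w)) ^ k * D_gf p w ^ (k + 1))"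
    using K_unit D_unit by (simp_all add: is_unit_power_iff)
  show ?thesis
    unfolding unit_eq_div2[OF units(1)] unit_eq_div2[OF units(2)]
    using H_times_denominator[OF assms(5)] H_times_denominator_D[OF assms(5)] by simp
qed

end
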